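(* Let $n\ge3$ and $R$ an associative ring with identity. Then $E_n(R)$ is normally generated by a subgroup isomorphic to $A_{n+1}$, namely the image of $A_{n+1}<\mathrm{SAut}(F_n)$ under $\mathrm{SAut}(F_n)\to\mathrm{SL}_n(\mathbb{Z})=E_n(\mathbb{Z})\to E_n(R)$, the last map induced by the ring map $\mathbb{Z}\to R$.
   Context: $E_n(R)$ is the subgroup of $\mathrm{GL}_n(R)$ generated by the elementary matrices $e_{ij}(r)$ ($1\le i\ne j\le n$, $r\in R$) with $1$'s on the diagonal, $r$ at $(i,j)$, zeros elsewhere. The subgroup $A_{n+1}<\mathrm{SAut}(F_n)$: with $F_n=\langle a_1,\dots,a_n\rangle$, $\sigma_{ij}$ ($1\le i\ne j\le n$) swaps $a_i,a_j$, and $\sigma_{i,n+1}$ sends $a_i\mapsto a_i^{-1}$, $a_j\mapsto a_ja_i^{-1}$ ($j\neq i$); these generate $S_{n+1}$ and $A_{n+1}$ is its even part. The map $\mathrm{SAut}(F_n)\to\mathrm{SL}_n(\mathbb{Z})$ is induced by the action on $F_n^{ab}=\mathbb{Z}^n$, and it is injective on this $A_{n+1}$. *)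

theory Defs
  imports "Jordan_Normal_Form.Matrix"
begin

definition elem_mat :: "nat \<Rightarrow> nat \<Rightarrow> nat \<Rightarrow> 'a::ring_1 \<Rightarrow> 'a mat" where
  "elem_mat n i j r = mat n n (\<lambda>(k,l). if k = l then 1 else if k = i \<and> l = j then r else 0)"

definition elem_gens :: "nat \<Rightarrow> 'a::ring_1 mat set" where
  "elem_gens n = {elem_mat n i j r | i j r. i < n \<and> j < n \<and> i \<noteq> j}"

definition is_inv_mat :: "nat \<Rightarrow> 'a::ring_1 mat \<Rightarrow> 'a mat \<Rightarrow> bool" where
  "is_inv_mat n A B \<longleftrightarrow> B \<in> carrier_mat n n \<and> A * B = 1\<^sub>m n \<and> B * A = 1\<^sub>m n"

inductive_set gen_subgroup :: "nat \<Rightarrow> 'a::ring_1 mat set \<Rightarrow> 'a mat set"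
  for n :: nat and S :: "'a mat set" where
  gen_one: "1\<^sub>m n \<in> gen_subgroup n S"
| gen_gen: "s \<in> S \<Longrightarrow> s \<in> gen_subgroup n S"
| gen_mult: "x \<in> gen_subgroup n S \<Longrightarrow> y \<in> gen_subgroup n S \<Longrightarrow> x * y \<in> gen_subgroup n S"
| gen_inv: "x \<in> gen_subgroup n S \<Longrightarrow> is_inv_mat n x y \<Longrightarrow> y \<in> gen_subgroup n S"

definition E_group :: "nat \<Rightarrow> 'a::ring_1 mat set" where
  "E_group n = gen_subgroup n (elem_gens n)"

definition normal_closure :: "nat \<Rightarrow> 'a::ring_1 mat set \<Rightarrow> 'a mat set \<Rightarrow> 'a mat set" where
  "normal_closure n G H =
     gen_subgroup n {g * h * g' | g h g'. g \<in> G \<and> h \<in> H \<and> is_inv_mat n g g'}"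

text \<open>Integer matrices (images in SL_n(Z) = GL(F_n^ab)) of the generators sigma_ij of
  S_{n+1} < Aut(F_n).  Indices 0..n-1 correspond to a_1..a_n, index n to n+1.
  Convention: column l of the matrix of phi is the abelianisation of phi(a_l),
  so that composition of automorphisms corresponds to matrix product.\<close>

definition sigma_swap :: "nat \<Rightarrow> nat \<Rightarrow> nat \<Rightarrow> int mat" where
  "sigma_swap n i j = mat n n (\<lambda>(k,l).
      if k = (if l = i then j else if l = j then i else l) then 1 else 0)"

text \<open>sigma_{i,n+1}: a_i |-> a_i^{-1}, a_l |-> a_l a_i^{-1} (l ~= i).\<close>
definition sigma_last :: "nat \<Rightarrow> nat \<Rightarrow> int mat" where
  "sigma_last n i = mat n n (\<lambda>(k,l).
      if l = i then (if k = i then -1 else 0)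
      else (if k = l then 1 else 0) - (if k = i then 1 else 0))"

definition sigma_gens :: "nat \<Rightarrow> int mat set" where
  "sigma_gens n = {sigma_swap n i j | i j. i < n \<and> j < n \<and> i \<noteq> j}
                 \<union> {sigma_last n i | i. i < n}"

text \<open>The image of A_{n+1} in SL_n(Z): the sigma's are the transpositions generating
  S_{n+1}, so the even part consists of the products of an even number of them.\<close>
definition alt_mats :: "nat \<Rightarrow> int mat set" where
  "alt_mats n = {foldr (*) ws (1\<^sub>m n) | ws. set ws \<subseteq> sigma_gens n \<and> even (length ws)}"

definition mat_of_int_mat :: "int mat \<Rightarrow> 'a::ring_1 mat" where
  "mat_of_int_mat A = map_mat of_int A"

end

theory Submission
  imports Defs
begin

text \<open>
  The image H of A_{n+1} lies in E_n(R): every generator sigma factors as X D_a with X in E_n(R)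
  and D_a the diagonal sign change at a; conjugation by D_a preserves E_n(R), and for a \<noteq> b
  the product D_a D_b is the square of the Weyl element e_ab(1) e_ba(-1) e_ab(1), so a product of
  an even number of sigmas lies in E_n(R).  Conversely H contains the 3-cycle
  P = sigma_01 sigma_12 (indices counted from 0), which conjugates e_01 to e_12.  Hence the normal
  closure contains the commutator of e_01(r) and P, which is e_01(r) e_12(-r), and its commutator
  with e_12(1), which is e_02(r); the Steinberg relation [e_ij(a), e_jk(b)] = e_ik(ab) spreads
  this to every elementary matrix.  For injectivity, the image of a permutation p of {0..n} is
  the matrix of p acting on the root lattice, and over a nonzero ring its zero pattern already
  determines p.
\<close>

declare index_mult_mat(1)[simp del]

lemma index_mult_mat_sum:
  assumes "A \<in> carrier_mat n n" "B \<in> carrier_mat n n" "k < n" "l < n"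
  shows "(A * B) $$ (k,l) = (\<Sum>m<n. A $$ (k,m) * B $$ (m,l))"
  using assms by (simp add: index_mult_mat(1) scalar_prod_def lessThan_atLeast0)

lemma mult_carrier_mat_square [simp]:
  "A \<in> carrier_mat n n \<Longrightarrow> B \<in> carrier_mat n n \<Longrightarrow> A * B \<in> carrier_mat n n"
  by (rule mult_carrier_mat)

lemma assoc_mult_mat_sym:
  "dim_col A = dim_row B \<Longrightarrow> dim_col B = dim_row C \<Longrightarrow> A * (B * C) = A * B * C"
  by (rule assoc_mult_mat[symmetric]) (auto intro: carrier_matI)

lemma is_inv_mat_one: "is_inv_mat n (1\<^sub>m n) (1\<^sub>m n)"
  by (simp add: is_inv_mat_def)

lemma is_inv_mat_mult:
  assumes "is_inv_mat n A A'" "is_inv_mat n B B'" "A \<in> carrier_mat n n" "B \<in> carrier_mat n n"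
  shows "is_inv_mat n (A * B) (B' * A')"
proof -
  have c: "A' \<in> carrier_mat n n" "B' \<in> carrier_mat n n"
    using assms by (auto simp: is_inv_mat_def)
  have "A * B * (B' * A') = A * (B * B') * A'" "B' * A' * (A * B) = B' * (A' * A) * B"
    using assms c by (simp_all add: assoc_mult_mat[of _ n n _ n _ n])
  then show ?thesis
    using assms c by (simp add: is_inv_mat_def)
qed

lemma gen_subgroup_carrier: "S \<subseteq> carrier_mat n n \<Longrightarrow> gen_subgroup n S \<subseteq> carrier_mat n n"
proof
  fix x assume S: "S \<subseteq> carrier_mat n n" and x: "x \<in> gen_subgroup n S"
  from x show "x \<in> carrier_mat n n"
    by induct (use S in \<open>auto simp: is_inv_mat_def\<close>)
qed

lemma gen_subgroup_mono: "S \<subseteq> gen_subgroup n T \<Longrightarrow> gen_subgroup n S \<subseteq> gen_subgroup n T"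
proof
  fix x assume S: "S \<subseteq> gen_subgroup n T" and x: "x \<in> gen_subgroup n S"
  from x show "x \<in> gen_subgroup n T"
    by induct (use S in \<open>auto intro: gen_subgroup.intros\<close>)
qed

lemma gen_subgroup_conj:
  assumes S: "S \<subseteq> carrier_mat n n" and D: "D \<in> carrier_mat n n" "is_inv_mat n D D'"
    and gens: "\<And>s. s \<in> S \<Longrightarrow> D * s * D' \<in> gen_subgroup n T"
    and x: "x \<in> gen_subgroup n S"
  shows "D * x * D' \<in> gen_subgroup n T"
  using x
proof (induct rule: gen_subgroup.induct)
  case gen_one
  then show ?case
    using D by (simp add: is_inv_mat_def gen_subgroup.gen_one)
next
  case (gen_gen s)
  then show ?case by (rule gens)
next
  case (gen_mult x y)
  have c: "x \<in> carrier_mat n n" "y \<in> carrier_mat n n" "D' \<in> carrier_mat n n"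
    using gen_mult gen_subgroup_carrier[OF S] D by (auto simp: is_inv_mat_def)
  have "D * (x * y) * D' = D * x * (D' * D) * y * D'"
    using c D by (simp add: is_inv_mat_def assoc_mult_mat[of _ n n _ n _ n])
  also have "\<dots> = (D * x * D') * (D * y * D')"
    using c D by (simp add: assoc_mult_mat[of _ n n _ n _ n])
  finally show ?case
    using gen_mult by (simp add: gen_subgroup.gen_mult)
next
  case (gen_inv x y)
  have c: "x \<in> carrier_mat n n" "y \<in> carrier_mat n n" "D' \<in> carrier_mat n n"
    using gen_inv gen_subgroup_carrier[OF S] D by (auto simp: is_inv_mat_def)
  have "D * x * D' * (D * y * D') = D * (x * (D' * D) * y) * D'"
    "D * y * D' * (D * x * D') = D * (y * (D' * D) * x) * D'"
    using c D by (simp_all add: assoc_mult_mat[of _ n n _ n _ n])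
  then have "is_inv_mat n (D * x * D') (D * y * D')"
    using c D gen_inv(3) by (simp add: is_inv_mat_def)
  with gen_inv show ?case
    by (blast intro: gen_subgroup.gen_inv)
qed

lemma normal_closure_carrier:
  assumes "G \<subseteq> carrier_mat n n" "H \<subseteq> carrier_mat n n"
  shows "normal_closure n G H \<subseteq> carrier_mat n n"
  unfolding normal_closure_def
  using assms by (intro gen_subgroup_carrier) (force simp: is_inv_mat_def)

lemma normal_closure_subset:
  assumes "H \<subseteq> gen_subgroup n S"
  shows "normal_closure n (gen_subgroup n S) H \<subseteq> gen_subgroup n S"
  unfolding normal_closure_def
proof (intro gen_subgroup_mono subsetI)
  fix y assume "y \<in> {g * h * g' |g h g'. g \<in> gen_subgroup n S \<and> h \<in> H \<and> is_inv_mat n g g'}"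
  then obtain g h g' where "y = g * h * g'" "g \<in> gen_subgroup n S" "h \<in> H" "is_inv_mat n g g'"
    by blast
  with assms show "y \<in> gen_subgroup n S"
    by (blast intro: gen_subgroup.gen_mult gen_subgroup.gen_inv)
qed

lemma normal_closure_superset:
  assumes "H \<subseteq> carrier_mat n n"
  shows "H \<subseteq> normal_closure n (gen_subgroup n S) H"
proof
  fix h assume "h \<in> H"
  then have "1\<^sub>m n * h * 1\<^sub>m n \<in> normal_closure n (gen_subgroup n S) H"
    unfolding normal_closure_def by (blast intro: gen_subgroup.intros is_inv_mat_one)
  then show "h \<in> normal_closure n (gen_subgroup n S) H"
    using \<open>h \<in> H\<close> assms by auto
qed

lemma normal_closure_conj:
  assumes S: "S \<subseteq> carrier_mat n n" and H: "H \<subseteq> carrier_mat n n"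
    and g: "g \<in> gen_subgroup n S" "is_inv_mat n g g'"
    and x: "x \<in> normal_closure n (gen_subgroup n S) H"
  shows "g * x * g' \<in> normal_closure n (gen_subgroup n S) H"
proof -
  let ?C = "{g * h * g' |g h g'. g \<in> gen_subgroup n S \<and> h \<in> H \<and> is_inv_mat n g g'}"
  have G: "gen_subgroup n S \<subseteq> carrier_mat n n"
    using S by (rule gen_subgroup_carrier)
  have conj_gen: "g * c * g' \<in> gen_subgroup n ?C" if "c \<in> ?C" for c
  proof -
    obtain g1 h g1' where c: "c = g1 * h * g1'" "g1 \<in> gen_subgroup n S" "h \<in> H"
      "is_inv_mat n g1 g1'"
      using \<open>c \<in> ?C\<close> by blast
    have carr: "g \<in> carrier_mat n n" "g1 \<in> carrier_mat n n" "h \<in> carrier_mat n n"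
      "g' \<in> carrier_mat n n" "g1' \<in> carrier_mat n n"
      using c g G H by (auto simp: is_inv_mat_def)
    then have "g * c * g' = (g * g1) * h * (g1' * g')"
      using c by (simp add: assoc_mult_mat[of _ n n _ n _ n])
    moreover have "g * g1 \<in> gen_subgroup n S" "is_inv_mat n (g * g1) (g1' * g')"
      using c g carr by (auto intro: gen_subgroup.gen_mult is_inv_mat_mult)
    ultimately show ?thesis
      using c by (blast intro: gen_subgroup.gen_gen)
  qed
  have "?C \<subseteq> gen_subgroup n ?C"
    by (blast intro: gen_subgroup.gen_gen)
  then have C: "?C \<subseteq> carrier_mat n n"
    using normal_closure_carrier[OF G H] unfolding normal_closure_def by blast
  have "g \<in> carrier_mat n n"
    using g G by blast
  from gen_subgroup_conj[OF C this g(2) conj_gen] x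
  show ?thesis
    unfolding normal_closure_def by blast
qed

lemma normal_closure_commutator:
  assumes S: "S \<subseteq> carrier_mat n n" and H: "H \<subseteq> carrier_mat n n"
    and x: "x \<in> normal_closure n (gen_subgroup n S) H" "is_inv_mat n x x'"
    and g: "g \<in> gen_subgroup n S" "is_inv_mat n g g'"
  shows "x * g * x' * g' \<in> normal_closure n (gen_subgroup n S) H"
    and "g * x * g' * x' \<in> normal_closure n (gen_subgroup n S) H"
proof -
  let ?N = "normal_closure n (gen_subgroup n S) H"
  have x'N: "x' \<in> ?N"
    using x unfolding normal_closure_def by (blast intro: gen_subgroup.gen_inv)
  have carr: "x \<in> carrier_mat n n" "g \<in> carrier_mat n n" "x' \<in> carrier_mat n n"
    "g' \<in> carrier_mat n n"
    using x g normal_closure_carrier[OF gen_subgroup_carrier[OF S] H] gen_subgroup_carrier[OF S]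
    by (auto simp: is_inv_mat_def)
  have "x * (g * x' * g') \<in> ?N"
    using x(1) normal_closure_conj[OF S H g x'N] unfolding normal_closure_def
    by (rule gen_subgroup.gen_mult)
  then show "x * g * x' * g' \<in> ?N"
    using carr by (simp add: assoc_mult_mat[of _ n n _ n _ n])
  show "g * x * g' * x' \<in> ?N"
    using normal_closure_conj[OF S H g x(1)] x'N unfolding normal_closure_def
    by (rule gen_subgroup.gen_mult)
qed

lemma elem_mat_carrier [simp]: "elem_mat n i j r \<in> carrier_mat n n"
  by (simp add: elem_mat_def)

lemma elem_mat_dim [simp]: "dim_row (elem_mat n i j r) = n" "dim_col (elem_mat n i j r) = n"
  by (simp_all add: elem_mat_def)

lemma elem_mat_index:
  "k < n \<Longrightarrow> l < n \<Longrightarrow>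
    elem_mat n i j r $$ (k,l) = (if k = l then 1 else if k = i \<and> l = j then r else 0)"
  by (simp add: elem_mat_def)

lemma mult_elem_mat_index:
  assumes "dim_row A = n" "dim_col A = n" "i \<noteq> j" "i < n" "j < n" "k < n" "l < n"
  shows "(A * elem_mat n i j r) $$ (k,l) = A $$ (k,l) + (if l = j then A $$ (k,i) * r else 0)"
proof -
  have "(A * elem_mat n i j r) $$ (k,l) = (\<Sum>m<n. A $$ (k,m) * elem_mat n i j r $$ (m,l))"
    using assms by (intro index_mult_mat_sum) (auto intro: carrier_matI)
  also have "\<dots> = (\<Sum>m<n. (if m = l then A $$ (k,m) else 0)
      + (if m = i \<and> l = j then A $$ (k,m) * r else 0))"
    using assms by (intro sum.cong) (auto simp: elem_mat_index)
  also have "\<dots> = A $$ (k,l) + (if l = j then A $$ (k,i) * r else 0)"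
    using assms by (simp add: sum.distrib)
  finally show ?thesis .
qed

lemma elem_mat_add:
  "i \<noteq> j \<Longrightarrow> i < n \<Longrightarrow> j < n \<Longrightarrow> elem_mat n i j a * elem_mat n i j b = elem_mat n i j (a + b)"
  by (intro eq_matI) (auto simp: mult_elem_mat_index elem_mat_index)

lemma elem_mat_zero: "elem_mat n i j 0 = 1\<^sub>m n"
  by (intro eq_matI) (auto simp: elem_mat_index)

lemma is_inv_elem_mat:
  "i \<noteq> j \<Longrightarrow> i < n \<Longrightarrow> j < n \<Longrightarrow> is_inv_mat n (elem_mat n i j a) (elem_mat n i j (-a))"
  by (simp add: is_inv_mat_def elem_mat_add elem_mat_zero)

lemma elem_mat_commutator:
  assumes "i \<noteq> j" "j \<noteq> k" "i \<noteq> k" "i < n" "j < n" "k < n"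
  shows "elem_mat n i j a * elem_mat n j k b * elem_mat n i j (-a) * elem_mat n j k (-b)
    = elem_mat n i k (a * b)"
  using assms by (intro eq_matI) (auto simp: mult_elem_mat_index elem_mat_index)

lemma elem_gens_carrier: "elem_gens n \<subseteq> carrier_mat n n"
  by (auto simp: elem_gens_def)

lemma E_group_carrier: "E_group n \<subseteq> carrier_mat n n"
  unfolding E_group_def by (rule gen_subgroup_carrier[OF elem_gens_carrier])

lemma elem_mat_in_E_group: "i \<noteq> j \<Longrightarrow> i < n \<Longrightarrow> j < n \<Longrightarrow> elem_mat n i j a \<in> E_group n"
  unfolding E_group_def by (intro gen_gen) (auto simp: elem_gens_def)

definition perm_mat :: "nat \<Rightarrow> (nat \<Rightarrow> nat) \<Rightarrow> 'a::ring_1 mat" where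
  "perm_mat n p = mat n n (\<lambda>(k,l). if k = p l then 1 else 0)"

lemma perm_mat_carrier [simp]: "perm_mat n p \<in> carrier_mat n n"
  by (simp add: perm_mat_def)

lemma perm_mat_dim [simp]: "dim_row (perm_mat n p) = n" "dim_col (perm_mat n p) = n"
  by (simp_all add: perm_mat_def)

lemma perm_mat_index: "k < n \<Longrightarrow> l < n \<Longrightarrow> perm_mat n p $$ (k,l) = (if k = p l then 1 else 0)"
  by (simp add: perm_mat_def)

lemma mult_perm_mat_index:
  assumes "dim_row A = n" "dim_col A = n" "p l < n" "k < n" "l < n"
  shows "(A * perm_mat n p) $$ (k,l) = A $$ (k, p l)"
proof -
  have "(A * perm_mat n p) $$ (k,l) = (\<Sum>m<n. A $$ (k,m) * perm_mat n p $$ (m,l))"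
    using assms by (intro index_mult_mat_sum) (auto intro: carrier_matI)
  also have "\<dots> = (\<Sum>m<n. if m = p l then A $$ (k,m) else 0)"
    using assms by (intro sum.cong) (auto simp: perm_mat_index)
  finally show ?thesis
    using assms by simp
qed

lemma perm_mat_mult:
  "(\<And>l. l < n \<Longrightarrow> q l < n) \<Longrightarrow> perm_mat n p * perm_mat n q = (perm_mat n (p \<circ> q) :: 'a::ring_1 mat)"
  by (intro eq_matI) (auto simp: mult_perm_mat_index perm_mat_index)

context
  fixes n :: nat and p q :: "nat \<Rightarrow> nat"
  assumes perm: "\<And>l. l < n \<Longrightarrow> p l < n" "\<And>l. l < n \<Longrightarrow> q l < n"
    and inverse: "\<And>l. l < n \<Longrightarrow> p (q l) = l" "\<And>l. l < n \<Longrightarrow> q (p l) = l"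
begin

lemma is_inv_perm_mat: "is_inv_mat n (perm_mat n p :: 'a::ring_1 mat) (perm_mat n q)"
proof -
  have "perm_mat n (p \<circ> q) = (1\<^sub>m n :: 'a mat)" "perm_mat n (q \<circ> p) = (1\<^sub>m n :: 'a mat)"
    using perm inverse by (auto intro!: eq_matI simp: perm_mat_index)
  then show ?thesis
    using perm by (simp add: is_inv_mat_def perm_mat_mult)
qed

lemma perm_mat_conj_elem_mat:
  assumes "i \<noteq> j" "i < n" "j < n"
  shows "perm_mat n p * elem_mat n i j r * perm_mat n q = (elem_mat n (p i) (p j) r :: 'a::ring_1 mat)"
proof (rule eq_matI)
  fix k l assume "k < dim_row (elem_mat n (p i) (p j) r :: 'a mat)"
    "l < dim_col (elem_mat n (p i) (p j) r :: 'a mat)"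
  then have kl: "k < n" "l < n"
    by auto
  have "q l = j \<longleftrightarrow> l = p j" "p i \<noteq> p j"
    using kl assms inverse by metis+
  then show "(perm_mat n p * elem_mat n i j r * perm_mat n q) $$ (k,l) = elem_mat n (p i) (p j) r $$ (k,l)"
    using kl assms perm inverse
    by (simp add: mult_perm_mat_index mult_elem_mat_index perm_mat_index elem_mat_index)
qed auto

end

definition cycle3 :: "nat \<Rightarrow> nat" where
  "cycle3 m = (if m = 0 then 1 else if m = 1 then 2 else if m = 2 then 0 else m)"

definition cycle3_inv :: "nat \<Rightarrow> nat" where
  "cycle3_inv m = (if m = 0 then 2 else if m = 1 then 0 else if m = 2 then 1 else m)"

lemma cycle3_perm:
  assumes "3 \<le> n"
  shows "\<And>l. l < n \<Longrightarrow> cycle3 l < n" "\<And>l. l < n \<Longrightarrow> cycle3_inv l < n"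
    "\<And>l. cycle3 (cycle3_inv l) = l" "\<And>l. cycle3_inv (cycle3 l) = l"
  using assms by (auto simp: cycle3_def cycle3_inv_def)

lemma elem_mat_in_normal_closure_right:
  assumes H: "H \<subseteq> carrier_mat n n" and x: "elem_mat n a b r \<in> normal_closure n (E_group n) H"
    and "a \<noteq> b" "b \<noteq> c" "a \<noteq> c" "a < n" "b < n" "c < n"
  shows "elem_mat n a c r \<in> normal_closure n (E_group n) H"
  using normal_closure_commutator(1)[OF elem_gens_carrier H, folded E_group_def,
      OF x is_inv_elem_mat elem_mat_in_E_group is_inv_elem_mat, of b c 1] assms
  by (simp add: elem_mat_commutator)

lemma elem_mat_in_normal_closure_left:
  assumes H: "H \<subseteq> carrier_mat n n" and x: "elem_mat n b c r \<in> normal_closure n (E_group n) H"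
    and "a \<noteq> b" "b \<noteq> c" "a \<noteq> c" "a < n" "b < n" "c < n"
  shows "elem_mat n a c r \<in> normal_closure n (E_group n) H"
  using normal_closure_commutator(2)[OF elem_gens_carrier H, folded E_group_def,
      OF x is_inv_elem_mat elem_mat_in_E_group is_inv_elem_mat, of a b 1] assms
  by (simp add: elem_mat_commutator)

lemma elem_mat_0_2_in_normal_closure:
  fixes H :: "'a::ring_1 mat set"
  assumes n: "3 \<le> n" and H: "H \<subseteq> carrier_mat n n" and P: "perm_mat n cycle3 \<in> H"
  shows "elem_mat n 0 2 r \<in> normal_closure n (E_group n) H"
proof -
  let ?N = "normal_closure n (E_group n) H" and ?E = "elem_mat n :: nat \<Rightarrow> nat \<Rightarrow> 'a \<Rightarrow> 'a mat"
    and ?P = "perm_mat n cycle3 :: 'a mat" and ?P' = "perm_mat n cycle3_inv :: 'a mat"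
  note commutator = normal_closure_commutator[OF elem_gens_carrier H, folded E_group_def]
  have "?P \<in> ?N"
    using P normal_closure_superset[OF H] unfolding E_group_def by blast
  then have "?E 0 1 r * ?P * ?E 0 1 (-r) * ?P' \<in> ?N"
    using n by (intro commutator(2) is_inv_perm_mat cycle3_perm elem_mat_in_E_group is_inv_elem_mat) auto
  moreover have "cycle3 0 = 1" "cycle3 1 = 2"
    by (simp_all add: cycle3_def)
  then have "?P * ?E 0 1 (-r) * ?P' = ?E 1 2 (-r)"
    using n perm_mat_conj_elem_mat[OF cycle3_perm[OF n], of 0 1] by simp
  moreover have "?E 0 1 r * ?P * ?E 0 1 (-r) * ?P' = ?E 0 1 r * (?P * ?E 0 1 (-r) * ?P')"
    by (simp del: assoc_mult_mat add: assoc_mult_mat_sym)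
  ultimately have x: "?E 0 1 r * ?E 1 2 (-r) \<in> ?N"
    by simp
  have "is_inv_mat n (?E 0 1 r * ?E 1 2 (-r)) (?E 1 2 r * ?E 0 1 (-r))"
    using n by (intro is_inv_mat_mult) (auto intro: is_inv_elem_mat is_inv_elem_mat[of _ _ _ "-r", simplified])
  then have "?E 0 1 r * ?E 1 2 (-r) * ?E 1 2 1 * (?E 1 2 r * ?E 0 1 (-r)) * ?E 1 2 (-1) \<in> ?N"
    using n by (intro commutator(1) x elem_mat_in_E_group is_inv_elem_mat) auto
  moreover have "?E 0 1 r * ?E 1 2 (-r) * ?E 1 2 1 * (?E 1 2 r * ?E 0 1 (-r)) * ?E 1 2 (-1)
      = ?E 0 2 r"
    using n by (simp del: assoc_mult_mat add: assoc_mult_mat_sym)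
      (intro eq_matI; auto simp: mult_elem_mat_index elem_mat_index)
  ultimately show ?thesis
    by simp
qed

lemma elem_gens_subset_normal_closure:
  fixes H :: "'a::ring_1 mat set"
  assumes n: "3 \<le> n" and H: "H \<subseteq> carrier_mat n n" and P: "perm_mat n cycle3 \<in> H"
  shows "elem_gens n \<subseteq> normal_closure n (E_group n) H"
proof -
  let ?N = "normal_closure n (E_group n) H"
  note right = elem_mat_in_normal_closure_right[OF H] and left = elem_mat_in_normal_closure_left[OF H]
  have row0: "elem_mat n 0 j r \<in> ?N" if "j < n" "j \<noteq> 0" for j r
  proof (cases "j = 2")
    case True
    then show ?thesis
      using elem_mat_0_2_in_normal_closure[OF n H P] by simp
  next
    case False
    then show ?thesis
      using that n by (intro right[OF elem_mat_0_2_in_normal_closure[OF n H P]]) auto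
  qed
  have off0: "elem_mat n i j r \<in> ?N" if "i < n" "j < n" "i \<noteq> j" "i \<noteq> 0" "j \<noteq> 0" for i j r
    using that by (intro left[OF row0]) auto
  have col0: "elem_mat n i 0 r \<in> ?N" if "i < n" "i \<noteq> 0" for i r
  proof -
    define b where "b = (if i = 1 then 2 else 1 :: nat)"
    have "b < n" "b \<noteq> 0" "b \<noteq> i"
      using n by (auto simp: b_def)
    then show ?thesis
      using that by (intro right[OF off0, where b=b]) auto
  qed
  show ?thesis
  proof
    fix x :: "'a mat" assume "x \<in> elem_gens n"
    then obtain i j r where "x = elem_mat n i j r" "i < n" "j < n" "i \<noteq> j"
      by (auto simp: elem_gens_def)
    then show "x \<in> ?N"
      using row0 off0 col0 by (cases "i = 0"; cases "j = 0") auto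
  qed
qed

definition sign_mat :: "nat \<Rightarrow> nat \<Rightarrow> 'a::ring_1 mat" where
  "sign_mat n a = mat n n (\<lambda>(k,l). if k = l then (if k = a then -1 else 1) else 0)"

lemma sign_mat_carrier [simp]: "sign_mat n a \<in> carrier_mat n n"
  by (simp add: sign_mat_def)

lemma sign_mat_dim [simp]: "dim_row (sign_mat n a) = n" "dim_col (sign_mat n a) = n"
  by (simp_all add: sign_mat_def)

lemma sign_mat_index:
  "k < n \<Longrightarrow> l < n \<Longrightarrow> sign_mat n a $$ (k,l) = (if k = l then (if k = a then -1 else 1) else 0)"
  by (simp add: sign_mat_def)

lemma sign_mat_mult_index:
  assumes "dim_row A = n" "dim_col A = n" "k < n" "l < n"
  shows "(sign_mat n a * A) $$ (k,l) = (if k = a then - A $$ (k,l) else A $$ (k,l))"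
proof -
  have "(sign_mat n a * A) $$ (k,l) = (\<Sum>m<n. sign_mat n a $$ (k,m) * A $$ (m,l))"
    using assms by (intro index_mult_mat_sum) (auto intro: carrier_matI)
  also have "\<dots> = (\<Sum>m<n. if m = k then (if k = a then - A $$ (k,l) else A $$ (k,l)) else 0)"
    using assms by (intro sum.cong) (auto simp: sign_mat_index)
  finally show ?thesis
    using assms by simp
qed

lemma mult_sign_mat_index:
  assumes "dim_row A = n" "dim_col A = n" "k < n" "l < n"
  shows "(A * sign_mat n a) $$ (k,l) = (if l = a then - A $$ (k,l) else A $$ (k,l))"
proof -
  have "(A * sign_mat n a) $$ (k,l) = (\<Sum>m<n. A $$ (k,m) * sign_mat n a $$ (m,l))"
    using assms by (intro index_mult_mat_sum) (auto intro: carrier_matI)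
  also have "\<dots> = (\<Sum>m<n. if m = l then (if l = a then - A $$ (k,l) else A $$ (k,l)) else 0)"
    using assms by (intro sum.cong) (auto simp: sign_mat_index)
  finally show ?thesis
    using assms by simp
qed

lemma sign_mat_square: "sign_mat n a * sign_mat n a = (1\<^sub>m n :: 'a::ring_1 mat)"
  by (intro eq_matI) (auto simp: mult_sign_mat_index sign_mat_index)

lemma is_inv_sign_mat: "is_inv_mat n (sign_mat n a) (sign_mat n a)"
  by (simp add: is_inv_mat_def sign_mat_square)

lemma sign_mat_conj_E_group:
  assumes "a < n" "Y \<in> E_group n"
  shows "sign_mat n a * Y * sign_mat n a \<in> E_group n"
proof -
  have "sign_mat n a * s * sign_mat n a \<in> E_group n" if s: "s \<in> elem_gens n" for s
  proof -
    obtain i j r where "s = elem_mat n i j r" "i < n" "j < n" "i \<noteq> j"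
      using s by (auto simp: elem_gens_def)
    moreover from this have "sign_mat n a * s * sign_mat n a
        = elem_mat n i j (if (i = a) = (j = a) then r else - r)"
      using assms by (intro eq_matI) (auto simp: mult_sign_mat_index sign_mat_mult_index elem_mat_index)
    ultimately show ?thesis
      by (simp add: elem_mat_in_E_group)
  qed
  then show ?thesis
    using gen_subgroup_conj[OF elem_gens_carrier sign_mat_carrier is_inv_sign_mat, where T = "elem_gens n" and x = Y]
      assms(2)
    unfolding E_group_def by blast
qed

definition weyl_mat :: "nat \<Rightarrow> nat \<Rightarrow> nat \<Rightarrow> 'a::ring_1 mat" where
  "weyl_mat n i j = elem_mat n i j 1 * elem_mat n j i (-1) * elem_mat n i j 1"

lemma weyl_mat_dim [simp]: "dim_row (weyl_mat n i j) = n" "dim_col (weyl_mat n i j) = n"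
  by (simp_all add: weyl_mat_def)

lemma weyl_mat_index:
  assumes "i \<noteq> j" "i < n" "j < n" "k < n" "l < n"
  shows "weyl_mat n i j $$ (k,l) = (if k = l then (if k = i \<or> k = j then 0 else 1)
     else if k = i \<and> l = j then 1 else if k = j \<and> l = i then -1 else (0::'a::ring_1))"
  using assms unfolding weyl_mat_def by (auto simp: mult_elem_mat_index elem_mat_index)

lemma weyl_mat_in_E_group: "i \<noteq> j \<Longrightarrow> i < n \<Longrightarrow> j < n \<Longrightarrow> weyl_mat n i j \<in> E_group n"
  unfolding weyl_mat_def E_group_def
  by (intro gen_mult; rule elem_mat_in_E_group[unfolded E_group_def]; simp)

lemma sign_mat_mult_in_E_group:
  assumes "a < n" "b < n"
  shows "sign_mat n a * sign_mat n b \<in> (E_group n :: 'a::ring_1 mat set)"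
proof (cases "a = b")
  case True
  then show ?thesis
    using sign_mat_square[of n b] unfolding E_group_def by (metis gen_subgroup.gen_one)
next
  case False
  have "weyl_mat n a b * weyl_mat n a b
      = weyl_mat n a b * elem_mat n a b 1 * elem_mat n b a (-1) * elem_mat n a b 1"
    unfolding weyl_mat_def by (simp del: assoc_mult_mat add: assoc_mult_mat_sym)
  also have "\<dots> = (sign_mat n a * sign_mat n b :: 'a mat)"
    using False assms by (intro eq_matI)
      (auto simp: weyl_mat_index mult_elem_mat_index mult_sign_mat_index sign_mat_index)
  finally show ?thesis
    using weyl_mat_in_E_group[OF False assms] unfolding E_group_def by (metis gen_mult)
qed

definition row_mat :: "nat \<Rightarrow> nat \<Rightarrow> (nat \<Rightarrow> 'a) \<Rightarrow> 'a::ring_1 mat" where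
  "row_mat n i c = mat n n (\<lambda>(k,l). if k = l then 1 else if k = i then c l else 0)"

lemma row_mat_dim [simp]: "dim_row (row_mat n i c) = n" "dim_col (row_mat n i c) = n"
  by (simp_all add: row_mat_def)

lemma row_mat_in_E_group:
  assumes "i < n"
  shows "row_mat n i c \<in> E_group n"
proof -
  have "row_mat n i (\<lambda>l. if l < m then c l else 0) \<in> E_group n" for m
  proof (induct m)
    case 0
    have "row_mat n i (\<lambda>l. if l < 0 then c l else 0) = 1\<^sub>m n"
      by (intro eq_matI) (auto simp: row_mat_def)
    then show ?case
      by (simp add: E_group_def gen_one)
  next
    case (Suc m)
    show ?case
    proof (cases "m = i \<or> n \<le> m")
      case True
      then have "row_mat n i (\<lambda>l. if l < Suc m then c l else 0) = row_mat n i (\<lambda>l. if l < m then c l else 0)"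
        by (intro eq_matI) (auto simp: row_mat_def)
      then show ?thesis
        using Suc by simp
    next
      case False
      then have "row_mat n i (\<lambda>l. if l < Suc m then c l else 0)
          = row_mat n i (\<lambda>l. if l < m then c l else 0) * elem_mat n i m (c m)"
        using assms by (intro eq_matI) (auto simp: mult_elem_mat_index row_mat_def)
      moreover have "elem_mat n i m (c m) \<in> E_group n"
        using False assms by (intro elem_mat_in_E_group) auto
      ultimately show ?thesis
        using Suc unfolding E_group_def by (simp add: gen_mult)
    qed
  qed
  moreover have "row_mat n i c = row_mat n i (\<lambda>l. if l < n then c l else 0)"
    by (intro eq_matI) (auto simp: row_mat_def)
  ultimately show ?thesis
    by simp
qed

lemma mat_of_int_mat_mult:
  "A \<in> carrier_mat n n \<Longrightarrow> B \<in> carrier_mat n n \<Longrightarrow>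
    (mat_of_int_mat (A * B) :: 'a::ring_1 mat) = mat_of_int_mat A * mat_of_int_mat B"
  unfolding mat_of_int_mat_def by (rule of_int_hom.mat_hom_mult)

lemma mat_of_int_mat_one: "(mat_of_int_mat (1\<^sub>m n) :: 'a::ring_1 mat) = 1\<^sub>m n"
  unfolding mat_of_int_mat_def by (intro eq_matI) auto

lemma sigma_gens_carrier: "s \<in> sigma_gens n \<Longrightarrow> s \<in> carrier_mat n n"
  by (auto simp: sigma_gens_def sigma_swap_def sigma_last_def)

lemma foldr_sigma_gens_carrier:
  "set ws \<subseteq> sigma_gens n \<Longrightarrow> foldr (*) ws (1\<^sub>m n) \<in> carrier_mat n n"
  by (induct ws) (simp_all add: sigma_gens_carrier)

lemma sigma_gens_decomp:
  assumes "s \<in> sigma_gens n"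
  obtains X a where "X \<in> E_group n" "a < n" "(mat_of_int_mat s :: 'a::ring_1 mat) = X * sign_mat n a"
  using assms unfolding sigma_gens_def
proof (elim UnE CollectE exE conjE)
  fix i j assume s: "s = sigma_swap n i j" "i < n" "j < n" "i \<noteq> j"
  then have "(mat_of_int_mat s :: 'a mat) = weyl_mat n i j * sign_mat n i"
    unfolding mat_of_int_mat_def
    by (intro eq_matI) (auto simp: mult_sign_mat_index weyl_mat_index sigma_swap_def)
  with s that show thesis
    using weyl_mat_in_E_group by blast
next
  fix i assume s: "s = sigma_last n i" "i < n"
  then have "(mat_of_int_mat s :: 'a mat) = row_mat n i (\<lambda>_. -1) * sign_mat n i"
    unfolding mat_of_int_mat_def
    by (intro eq_matI) (auto simp: mult_sign_mat_index row_mat_def sigma_last_def)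
  with s that show thesis
    using row_mat_in_E_group by blast
qed

lemma sigma_gens_pair_mult_E_group:
  assumes s: "s \<in> sigma_gens n" and t: "t \<in> sigma_gens n" and F: "F \<in> E_group n"
  shows "(mat_of_int_mat s :: 'a::ring_1 mat) * (mat_of_int_mat t * F) \<in> E_group n"
proof -
  obtain X a where X: "X \<in> E_group n" "a < n" "(mat_of_int_mat s :: 'a mat) = X * sign_mat n a"
    using s by (rule sigma_gens_decomp)
  obtain Y b where Y: "Y \<in> E_group n" "b < n" "(mat_of_int_mat t :: 'a mat) = Y * sign_mat n b"
    using t by (rule sigma_gens_decomp)
  have c: "X \<in> carrier_mat n n" "Y \<in> carrier_mat n n" "F \<in> carrier_mat n n"
    using X Y F E_group_carrier by blast+
  have "X * (sign_mat n a * Y * sign_mat n a) * (sign_mat n a * sign_mat n b) * F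
      = X * sign_mat n a * Y * (sign_mat n a * sign_mat n a) * sign_mat n b * F"
    using c by (simp del: assoc_mult_mat add: assoc_mult_mat_sym)
  also have "\<dots> = X * sign_mat n a * (Y * sign_mat n b * F)"
    using c by (simp add: sign_mat_square assoc_mult_mat[of _ n n _ n _ n])
  moreover have "X * (sign_mat n a * Y * sign_mat n a) * (sign_mat n a * sign_mat n b) * F \<in> E_group n"
    using X Y F sign_mat_conj_E_group[OF X(2) Y(1)] sign_mat_mult_in_E_group[OF X(2) Y(2)]
    unfolding E_group_def by (meson gen_subgroup.gen_mult)
  ultimately show ?thesis
    using X Y by metis
qed

lemma alt_mats_subset_E_group: "(mat_of_int_mat ` alt_mats n :: 'a::ring_1 mat set) \<subseteq> E_group n"
proof -
  have "(mat_of_int_mat (foldr (*) ws (1\<^sub>m n)) :: 'a mat) \<in> E_group n"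
    if "set ws \<subseteq> sigma_gens n" "even (length ws)" for ws
    using that
  proof (induct ws rule: induct_list012)
    case 1
    then show ?case
      by (simp add: mat_of_int_mat_one E_group_def gen_one)
  next
    case (3 s t ws)
    have "foldr (*) ws (1\<^sub>m n) \<in> carrier_mat n n"
      using 3(3) by (simp add: foldr_sigma_gens_carrier)
    then have "(mat_of_int_mat (foldr (*) (s # t # ws) (1\<^sub>m n)) :: 'a mat)
        = mat_of_int_mat s * (mat_of_int_mat t * mat_of_int_mat (foldr (*) ws (1\<^sub>m n)))"
      using 3(3) by (simp add: mat_of_int_mat_mult[of _ n] sigma_gens_carrier)
    then show ?case
      using 3 by (simp add: sigma_gens_pair_mult_E_group)
  qed simp
  then show ?thesis
    unfolding alt_mats_def by blast
qed

text \<open>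
  The matrix of a permutation p of {0..n} acting on the root lattice
  {x \<in> \<int>^{n+1}. x_0 + ... + x_n = 0} in the basis e_l - e_n (l < n), with e_n read as 0.
\<close>
definition std_rep_mat :: "nat \<Rightarrow> (nat \<Rightarrow> nat) \<Rightarrow> int mat" where
  "std_rep_mat n p = mat n n (\<lambda>(k,l). (if p l = k then 1 else 0) - (if p n = k then 1 else 0))"

lemma std_rep_mat_dim [simp]: "dim_row (std_rep_mat n p) = n" "dim_col (std_rep_mat n p) = n"
  by (simp_all add: std_rep_mat_def)

lemma std_rep_mat_index:
  "k < n \<Longrightarrow> l < n \<Longrightarrow> std_rep_mat n p $$ (k,l) = (if p l = k then 1 else 0) - (if p n = k then 1 else 0)"
  by (simp add: std_rep_mat_def)

lemma std_rep_mat_mult: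
  assumes q: "q ` {..n} \<subseteq> {..n}"
  shows "std_rep_mat n p * std_rep_mat n q = std_rep_mat n (p \<circ> q)"
proof (rule eq_matI)
  fix k l assume "k < dim_row (std_rep_mat n (p \<circ> q))" "l < dim_col (std_rep_mat n (p \<circ> q))"
  then have kl: "k < n" "l < n"
    by (auto simp: std_rep_mat_def)
  define a where "a m = (if p m = k then 1 else 0) - (if p n = k then 1 else (0::int))" for m
  have delta: "(\<Sum>m<n. a m * (if q x = m then 1 else 0)) = a (q x)" if "x \<le> n" for x
  proof -
    have "(\<Sum>m<n. a m * (if q x = m then 1 else 0)) = (\<Sum>m<n. if m = q x then a m else 0)"
      by (intro sum.cong) auto
    also have "\<dots> = a (q x)"
      using q that by (cases "q x = n") (auto simp: a_def)
    finally show ?thesis .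
  qed
  have "(std_rep_mat n p * std_rep_mat n q) $$ (k,l)
      = (\<Sum>m<n. std_rep_mat n p $$ (k,m) * std_rep_mat n q $$ (m,l))"
    using kl by (intro index_mult_mat_sum) auto
  also have "\<dots> = (\<Sum>m<n. a m * std_rep_mat n q $$ (m,l))"
    using kl by (intro sum.cong) (auto simp: std_rep_mat_index a_def)
  also have "\<dots> = (\<Sum>m<n. a m * (if q l = m then 1 else 0)) - (\<Sum>m<n. a m * (if q n = m then 1 else 0))"
    using kl by (simp add: std_rep_mat_index sum_subtractf[symmetric] right_diff_distrib)
  also have "\<dots> = a (q l) - a (q n)"
    using kl by (simp add: delta)
  also have "\<dots> = std_rep_mat n (p \<circ> q) $$ (k,l)"
    using kl by (simp add: std_rep_mat_index a_def)
  finally show "(std_rep_mat n p * std_rep_mat n q) $$ (k,l) = std_rep_mat n (p \<circ> q) $$ (k,l)" .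
qed auto

lemma sigma_gens_std_rep_mat:
  assumes "s \<in> sigma_gens n"
  obtains a b where "a \<le> n" "b \<le> n" "s = std_rep_mat n (Transposition.transpose a b)"
  using assms unfolding sigma_gens_def
proof (elim UnE CollectE exE conjE)
  fix i j assume "s = sigma_swap n i j" "i < n" "j < n" "i \<noteq> j"
  moreover from this have "sigma_swap n i j = std_rep_mat n (Transposition.transpose i j)"
    by (intro eq_matI) (auto simp: std_rep_mat_index sigma_swap_def transpose_def)
  ultimately show thesis
    using that[of i j] by simp
next
  fix i assume "s = sigma_last n i" "i < n"
  moreover from this have "sigma_last n i = std_rep_mat n (Transposition.transpose i n)"
    by (intro eq_matI) (auto simp: std_rep_mat_index sigma_last_def transpose_def)
  ultimately show thesis
    using that[of i n] by simp
qed

lemma alt_mats_std_rep_mat: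
  assumes "A \<in> alt_mats n"
  obtains p where "bij_betw p {..n} {..n}" "A = std_rep_mat n p"
proof -
  have "\<exists>p. bij_betw p {..n} {..n} \<and> foldr (*) ws (1\<^sub>m n) = std_rep_mat n p"
    if "set ws \<subseteq> sigma_gens n" for ws
    using that
  proof (induct ws)
    case Nil
    have "1\<^sub>m n = std_rep_mat n id"
      by (intro eq_matI) (auto simp: std_rep_mat_index)
    then show ?case
      by (auto intro: bij_betw_id)
  next
    case (Cons s ws)
    then obtain q where q: "bij_betw q {..n} {..n}" "foldr (*) ws (1\<^sub>m n) = std_rep_mat n q"
      by auto
    obtain a b where "a \<le> n" "b \<le> n" "s = std_rep_mat n (Transposition.transpose a b)"
      using Cons(2) by (auto elim: sigma_gens_std_rep_mat)
    moreover have "q ` {..n} \<subseteq> {..n}"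
      using q(1) by (simp add: bij_betw_def)
    ultimately have "foldr (*) (s # ws) (1\<^sub>m n) = std_rep_mat n (Transposition.transpose a b \<circ> q)"
      "bij_betw (Transposition.transpose a b \<circ> q) {..n} {..n}"
      using q by (auto simp: std_rep_mat_mult intro: bij_betw_trans)
    then show ?case
      by blast
  qed
  then show ?thesis
    using assms that unfolding alt_mats_def by blast
qed

lemma cycle3_in_alt_mats:
  assumes n: "3 \<le> n"
  shows "(perm_mat n cycle3 :: 'a::ring_1 mat) \<in> mat_of_int_mat ` alt_mats n"
proof -
  have swap: "sigma_swap n i j = perm_mat n (Transposition.transpose i j)" for i j
    by (simp add: sigma_swap_def perm_mat_def transpose_def)
  have "sigma_swap n 0 1 * sigma_swap n 1 2 = perm_mat n cycle3"
    unfolding swap using n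
    by (subst perm_mat_mult) (auto simp: cycle3_def transpose_def intro!: arg_cong[of _ _ "perm_mat n"])
  moreover have "sigma_swap n 0 1 \<in> sigma_gens n" "sigma_swap n 1 2 \<in> sigma_gens n"
    unfolding sigma_gens_def using n by (intro UnI1 CollectI; fastforce)+
  ultimately have "perm_mat n cycle3 \<in> alt_mats n"
    unfolding alt_mats_def
    by (intro CollectI exI[of _ "[sigma_swap n 0 1, sigma_swap n 1 2]"]) (auto simp: swap)
  moreover have "(mat_of_int_mat (perm_mat n cycle3) :: 'a mat) = perm_mat n cycle3"
    unfolding mat_of_int_mat_def by (intro eq_matI) (auto simp: perm_mat_index)
  ultimately show ?thesis
    by (metis image_eqI)
qed

lemma of_int_std_rep_mat_nonzero_iff:
  assumes "(1::'a::ring_1) \<noteq> 0" "bij_betw p {..n} {..n}" "k < n" "l < n"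
  shows "(of_int (std_rep_mat n p $$ (k,l)) :: 'a) \<noteq> 0 \<longleftrightarrow> p l = k \<or> p n = k"
proof -
  have "p l \<noteq> p n"
    using assms(2,4) by (auto simp: bij_betw_def inj_on_def)
  then show ?thesis
    using assms by (auto simp: std_rep_mat_index)
qed

lemma bij_eq_of_std_rep_pattern:
  fixes n :: nat and p q :: "nat \<Rightarrow> nat"
  assumes n: "2 \<le> n" and p: "bij_betw p {..n} {..n}" and q: "bij_betw q {..n} {..n}"
    and pattern: "\<And>k l. k < n \<Longrightarrow> l < n \<Longrightarrow> p l = k \<or> p n = k \<longleftrightarrow> q l = k \<or> q n = k"
    and x: "x \<le> n"
  shows "p x = q x"
proof -
  have range: "p y \<le> n" "q y \<le> n" if "y \<le> n" for y
    using bij_betw_apply[OF p] bij_betw_apply[OF q] that by auto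
  have last: "b n = a n"
    if b: "bij_betw b {..n} {..n}" and ab: "\<And>l. l < n \<Longrightarrow> b l = a n \<or> b n = a n"
      and "a n < n" for a b :: "nat \<Rightarrow> nat"
  proof (rule ccontr)
    assume "b n \<noteq> a n"
    then have "b 0 = b 1"
      using ab[of 0] ab[of 1] n by auto
    moreover have "inj_on b {..n}"
      using b by (simp add: bij_betw_def)
    ultimately show False
      using n by (auto dest: inj_onD)
  qed
  have last_eq: "p n = q n"
  proof (cases "p n < n \<or> q n < n")
    case True
    then show ?thesis
      using last[where a=p, OF q] last[where a=q, OF p] pattern by (metis order_less_irrefl)
  next
    case False
    then show ?thesis
      using range[of n] by simp
  qed
  have below: "b l = a l"
    if a: "bij_betw a {..n} {..n}" and "a n = b n"
      and ab: "b l = a l \<or> b n = a l" and "l < n" for a b :: "nat \<Rightarrow> nat" and l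
  proof -
    have "a l \<noteq> a n"
      using a \<open>l < n\<close> by (auto simp: bij_betw_def inj_on_def)
    then show ?thesis
      using ab \<open>a n = b n\<close> by auto
  qed
  show ?thesis
  proof (cases "x < n \<and> (p x < n \<or> q x < n)")
    case True
    then show ?thesis
      using below[where a=p and b=q, OF p last_eq] below[where a=q and b=p, OF q last_eq[symmetric]] pattern by (metis order_less_irrefl)
  next
    case False
    then show ?thesis
      using x last_eq range[OF x] by (cases "x = n") auto
  qed
qed

lemma inj_on_mat_of_int_alt_mats:
  assumes n: "3 \<le> n" and one: "(1::'a::ring_1) \<noteq> 0"
  shows "inj_on (mat_of_int_mat :: int mat \<Rightarrow> 'a mat) (alt_mats n)"
proof (rule inj_onI)
  fix A B assume "A \<in> alt_mats n" "B \<in> alt_mats n"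
    and eq: "(mat_of_int_mat A :: 'a mat) = mat_of_int_mat B"
  obtain p q where p: "bij_betw p {..n} {..n}" "A = std_rep_mat n p"
    and q: "bij_betw q {..n} {..n}" "B = std_rep_mat n q"
    using \<open>A \<in> alt_mats n\<close> \<open>B \<in> alt_mats n\<close> by (metis alt_mats_std_rep_mat)
  have "(of_int (A $$ (k,l)) :: 'a) = of_int (B $$ (k,l))" if "k < n" "l < n" for k l
    using arg_cong[OF eq, of "\<lambda>M. M $$ (k,l)"] that p q by (simp add: mat_of_int_mat_def)
  then have "p x = q x" if "x \<le> n" for x
    using n that by (intro bij_eq_of_std_rep_pattern[OF _ p(1) q(1)])
      (auto simp: p(2) q(2) of_int_std_rep_mat_nonzero_iff[OF one, symmetric] p(1) q(1))
  then show "A = B"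
    unfolding p(2) q(2) std_rep_mat_def by (intro eq_matI) auto
qed

theorem lemma5p2:
  fixes n :: nat
  assumes "n \<ge> 3"
  shows "normal_closure n (E_group n) (mat_of_int_mat ` alt_mats n) = (E_group n :: 'a::ring_1 mat set)
         \<and> ((1::'a) \<noteq> 0 \<longrightarrow> inj_on (mat_of_int_mat :: int mat \<Rightarrow> 'a mat) (alt_mats n))"
proof (intro conjI impI)
  let ?H = "mat_of_int_mat ` alt_mats n :: 'a mat set"
  have H: "?H \<subseteq> E_group n"
    by (rule alt_mats_subset_E_group)
  then have "?H \<subseteq> carrier_mat n n"
    using E_group_carrier by blast
  moreover have "perm_mat n cycle3 \<in> ?H"
    using assms by (rule cycle3_in_alt_mats)
  ultimately have "elem_gens n \<subseteq> normal_closure n (E_group n) ?H"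
    using assms by (intro elem_gens_subset_normal_closure)
  then have "E_group n \<subseteq> normal_closure n (E_group n) ?H"
    unfolding E_group_def normal_closure_def by (rule gen_subgroup_mono)
  moreover have "normal_closure n (E_group n) ?H \<subseteq> E_group n"
    using H unfolding E_group_def by (rule normal_closure_subset)
  ultimately show "normal_closure n (E_group n) ?H = E_group n"
    by blast
  show "(1::'a) \<noteq> 0 \<Longrightarrow> inj_on (mat_of_int_mat :: int mat \<Rightarrow> 'a mat) (alt_mats n)"
    using assms by (rule inj_on_mat_of_int_alt_mats)
qed

end
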